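(* Let $P$ be the program NQUEENS. Then $S^0\subseteq\mathcal{M}_P$; that is, NQUEENS is complete with respect to $S^0$. Consequently NQUEENS is also complete with respect to $S^0_{pqs}$ (i.e. $S^0_{pqs}\subseteq\mathcal{M}_P$).
   Context: Terms are built over a fixed alphabet containing the constant $0$, the unary symbol $s$, the list constant $[\,]$ and the binary list constructor $[\cdot|\cdot]$; $\mathcal{HU}$ is the set of ground terms and $\mathcal{HB}$ the set of ground atoms. A natural number $i$ is identified with the term $s^i(0)$. Prolog list notation is used: $[e_1,\dots,e_n|e]$ stands for $e$ when $n=0$, and a list of length $n$ is a term $[e_1,\dots,e_n]$. A term $e$ is the $k$-th member of a term $t$ ($k\ge 1$) if $t=[e_1,\dots,e_{k-1},e|e']$ for some terms $e_1,\dots,e_{k-1},e'$; $e$ is a member of $t$ if it is its $k$-th member for some $k$. A list of distinct members is a list whose elements are pairwise distinct. The program NQUEENS consists of the definite clauses (capitalized names are variables): (C1) $pqs(0,X_1,X_2,X_3)$. (C2) $pqs(s(I),Cs,Us,[X|Ds]) \gets pqs(I,Cs,[Y|Us],Ds),\ pq(s(I),Cs,Us,Ds)$. (C3) $pq(I,[I|X_1],[I|X_2],[I|X_3])$. (C4) $pq(I,[X_1|Cs],[X_2|Us],[X_3|Ds]) \gets pq(I,Cs,Us,Ds)$. $\mathcal{M}_P$ denotes the least Herbrand model of a program $P$. If a number $j$ is the $k$-th member of a list $cs$, the up-diagonal number of $j$ w.r.t. $i$ in $cs$ is $k+j-i$ and the down-diagonal number is $k+i-j$. A triple $(cs,us,ds)$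 of terms is correct up to $m$ w.r.t. $i$ when $0\le m\le i$ and: $cs$ is a list of distinct members and each $j\in\{1,\dots,m\}$ is a member of $cs$; the up-diagonal numbers of $1,\dots,m$ in $cs$ are pairwise distinct, and likewise the down-diagonal numbers; and for each $j\in\{1,\dots,m\}$, if the up-diagonal (resp. down-diagonal) number of $j$ w.r.t. $i$ in $cs$ is $l>0$, then the $l$-th member of $us$ (resp. $ds$) is $j$. Specifications: $S_{pq}=\{pq(i,[c_1,\dots,c_k,i|c],[u_1,\dots,u_k,i|u],[d_1,\dots,d_k,i|d])\in\mathcal{HB}\mid k\ge0\}$; $S^0_{pqs}=\{pqs(i,cs,us,[t|ds])\in\mathcal{HB}\mid i>0$ a natural number and $(cs,us,ds)$ is correct up to $i$ w.r.t. $i\}$; $S^0=S_{pq}\cup S^0_{pqs}\cup\{pqs(0,cs,us,ds)\mid cs,us,ds\in\mathcal{HU}\}$. *)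

theory Defs
  imports Main
begin

datatype gterm = Zero | S gterm | Nil | Cons gterm gterm

datatype gatom = Pqs gterm gterm gterm gterm | Pq gterm gterm gterm gterm

definition num :: "nat \<Rightarrow> gterm" where
  "num i = (S ^^ i) Zero"

text \<open>Prolog list notation [e1,...,en|e].\<close>
fun lst :: "gterm list \<Rightarrow> gterm \<Rightarrow> gterm" where
  "lst [] e = e"
| "lst (x # xs) e = Cons x (lst xs e)"

definition kth_member :: "gterm \<Rightarrow> nat \<Rightarrow> gterm \<Rightarrow> bool" where
  "kth_member t k e \<longleftrightarrow> k \<ge> 1 \<and> (\<exists>es e'. length es = k - 1 \<and> t = lst es (Cons e e'))"

definition is_member :: "gterm \<Rightarrow> gterm \<Rightarrow> bool" where
  "is_member t e \<longleftrightarrow> (\<exists>k. kth_member t k e)"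

definition distinct_list :: "gterm \<Rightarrow> bool" where
  "distinct_list t \<longleftrightarrow> (\<exists>es. t = lst es Nil \<and> distinct es)"

text \<open>The least Herbrand model is the least set of ground atoms closed under all
  ground instances of the clauses C1--C4.\<close>
inductive_set MP :: "gatom set" where
  C1: "Pqs Zero x1 x2 x3 \<in> MP"
| C2: "\<lbrakk> Pqs i cs (Cons y us) ds \<in> MP; Pq (S i) cs us ds \<in> MP \<rbrakk>
       \<Longrightarrow> Pqs (S i) cs us (Cons x ds) \<in> MP"
| C3: "Pq i (Cons i x1) (Cons i x2) (Cons i x3) \<in> MP"
| C4: "Pq i cs us ds \<in> MP \<Longrightarrow> Pq i (Cons x1 cs) (Cons x2 us) (Cons x3 ds) \<in> MP"

text \<open>(cs,us,ds) is correct up to m w.r.t. i.  Up-diagonal number of j (k-th member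
  of cs) is k+j-i, down-diagonal number is k+i-j (integers).\<close>
definition correct_upto :: "gterm \<Rightarrow> gterm \<Rightarrow> gterm \<Rightarrow> nat \<Rightarrow> nat \<Rightarrow> bool" where
  "correct_upto cs us ds m i \<longleftrightarrow>
     m \<le> i \<and>
     distinct_list cs \<and>
     (\<forall>j\<in>{1..m}. is_member cs (num j)) \<and>
     (\<forall>j1\<in>{1..m}. \<forall>j2\<in>{1..m}. \<forall>k1 k2.
        j1 \<noteq> j2 \<and> kth_member cs k1 (num j1) \<and> kth_member cs k2 (num j2) \<longrightarrow>
          int k1 + int j1 - int i \<noteq> int k2 + int j2 - int i) \<and>
     (\<forall>j1\<in>{1..m}. \<forall>j2\<in>{1..m}. \<forall>k1 k2.
        j1 \<noteq> j2 \<and> kth_member cs k1 (num j1) \<and> kth_member cs k2 (num j2) \<longrightarrow>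
          int k1 + int i - int j1 \<noteq> int k2 + int i - int j2) \<and>
     (\<forall>j\<in>{1..m}. \<forall>k. kth_member cs k (num j) \<longrightarrow>
        (int k + int j - int i > 0 \<longrightarrow> kth_member us (nat (int k + int j - int i)) (num j)) \<and>
        (int k + int i - int j > 0 \<longrightarrow> kth_member ds (nat (int k + int i - int j)) (num j)))"

definition S_pq :: "gatom set" where
  "S_pq = {Pq i (lst cs (Cons i c)) (lst us (Cons i u)) (lst ds (Cons i d)) | i cs us ds c u d.
             length cs = length us \<and> length us = length ds}"

definition S0_pqs :: "gatom set" where
  "S0_pqs = {Pqs (num i) cs us (Cons t ds) | i cs us ds t. i > 0 \<and> correct_upto cs us ds i i}"

definition S0 :: "gatom set" where
  "S0 = S_pq \<union> S0_pqs \<union> {Pqs Zero cs us ds | cs us ds. True}"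

end

theory Submission
  imports Defs
begin

text \<open>The pq atoms hold because the clauses C3/C4 put a common element at the same
  position of three lists.  For pqs, induct on i: queen i sits in some column k, and
  both its diagonal numbers w.r.t. i equal k, which gives the pq premise of C2.
  Passing from i = n+1 to n raises every up-diagonal number by one and lowers every
  down-diagonal number by one, so the placement remains correct up to n for the lists
  y # us and tl ds, where y is the queen (if any) on up-diagonal 1 w.r.t. n.\<close>

lemma kth_member_pos: "kth_member t k e \<Longrightarrow> k \<ge> 1"
  unfolding kth_member_def by auto

lemma kth_member_Cons_1: "kth_member (Cons a t) (Suc 0) e \<longleftrightarrow> e = a"
  unfolding kth_member_def by auto

lemma kth_member_Cons_Suc:
  assumes "k \<ge> 1"
  shows "kth_member (Cons a t) (Suc k) e \<longleftrightarrow> kth_member t k e"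
proof
  assume "kth_member (Cons a t) (Suc k) e"
  then obtain es e' where es: "length es = k" "Cons a t = lst es (Cons e e')"
    unfolding kth_member_def by auto
  with assms obtain es' where "es = a # es'" "t = lst es' (Cons e e')"
    by (cases es) auto
  with es assms show "kth_member t k e"
    unfolding kth_member_def by auto
next
  assume "kth_member t k e"
  then obtain es e' where "length es = k - 1" "t = lst es (Cons e e')"
    unfolding kth_member_def by auto
  with assms show "kth_member (Cons a t) (Suc k) e"
    unfolding kth_member_def by (intro conjI exI[of _ "a # es"] exI[of _ e']) auto
qed

lemma kth_member_imp_Cons: "kth_member t k e \<Longrightarrow> \<exists>a t'. t = Cons a t'"
  unfolding kth_member_def by (metis lst.elims)

lemma kth_member_lst: "length es = k \<Longrightarrow> kth_member (lst es (Cons e t)) (Suc k) e"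
  unfolding kth_member_def by auto

lemma num_Suc: "num (Suc n) = S (num n)"
  unfolding num_def by simp

lemma Pq_in_MP_if_common_member:
  "kth_member cs k i \<Longrightarrow> kth_member us k i \<Longrightarrow> kth_member ds k i \<Longrightarrow> Pq i cs us ds \<in> MP"
proof (induction k arbitrary: cs us ds)
  case 0
  then show ?case using kth_member_pos by fastforce
next
  case (Suc k)
  obtain c cs' u us' d ds' where lists: "cs = Cons c cs'" "us = Cons u us'" "ds = Cons d ds'"
    using Suc.prems kth_member_imp_Cons by metis
  show ?case
  proof (cases "k = 0")
    case True
    then show ?thesis using Suc.prems lists kth_member_Cons_1 MP.C3 by auto
  next
    case False
    then have "kth_member cs' k i" "kth_member us' k i" "kth_member ds' k i"
      using Suc.prems lists kth_member_Cons_Suc by auto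
    then show ?thesis using Suc.IH lists MP.C4 by auto
  qed
qed

lemma S_pq_subset_MP: "S_pq \<subseteq> MP"
  unfolding S_pq_def by (auto intro!: Pq_in_MP_if_common_member kth_member_lst)

lemma correct_upto_Pq:
  assumes "correct_upto cs us ds i i" and "0 < i"
  shows "Pq (num i) cs us ds \<in> MP"
proof -
  obtain k where k: "kth_member cs k (num i)"
    using assms unfolding correct_upto_def is_member_def by fastforce
  have "kth_member us k (num i)" "kth_member ds k (num i)"
    using assms k kth_member_pos[OF k] unfolding correct_upto_def
    by (auto dest!: bspec[of _ _ i] spec[of _ k])
  with k show ?thesis using Pq_in_MP_if_common_member by blast
qed

lemma correct_upto_lower:
  assumes "correct_upto cs us ds (Suc n) (Suc n)"
    and "\<forall>j\<in>{1..n}. \<forall>k. kth_member cs k (num j) \<longrightarrow> int k + int j - int n > 0 \<longrightarrow>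
           kth_member us' (nat (int k + int j - int n)) (num j)"
    and "\<forall>j\<in>{1..n}. \<forall>k. kth_member cs k (num j) \<longrightarrow> int k + int n - int j > 0 \<longrightarrow>
           kth_member ds' (nat (int k + int n - int j)) (num j)"
  shows "correct_upto cs us' ds' n n"
  using assms unfolding correct_upto_def by (auto 0 3)

lemma correct_upto_up_diagonals_Cons:
  assumes "correct_upto cs us ds (Suc n) (Suc n)"
  obtains y where "\<forall>j\<in>{1..n}. \<forall>k. kth_member cs k (num j) \<longrightarrow> int k + int j - int n > 0 \<longrightarrow>
    kth_member (Cons y us) (nat (int k + int j - int n)) (num j)"
proof -
  define first_diag where "first_diag j \<longleftrightarrow> j \<in> {1..n} \<and> (\<exists>k. kth_member cs k (num j) \<and> k + j = Suc n)" for j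
  have unique: "j' = j" if "first_diag j" "first_diag j'" for j j'
    using that assms unfolding first_diag_def correct_upto_def
    by (smt (verit, ccfv_SIG) atLeastAtMost_iff le_SucI of_nat_add)
  let ?y = "num (THE j. first_diag j)"
  have "kth_member (Cons ?y us) (nat (int k + int j - int n)) (num j)"
    if j: "j \<in> {1..n}" and k: "kth_member cs k (num j)" and pos: "int k + int j - int n > 0" for j k
  proof (cases "k + j = Suc n")
    case True
    then have "first_diag j" using j k unfolding first_diag_def by blast
    then have "?y = num j"
      by (metis the_equality unique)
    moreover have "nat (int k + int j - int n) = Suc 0" using True by linarith
    ultimately show ?thesis using kth_member_Cons_1 by simp
  next
    case False
    then have "kth_member us (nat (int k + int j - int (Suc n))) (num j)"
      using assms j k pos unfolding correct_upto_def by auto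
    moreover have "nat (int k + int j - int n) = Suc (nat (int k + int j - int (Suc n)))"
      using False pos by auto
    ultimately show ?thesis using kth_member_Cons_Suc False pos by auto
  qed
  then show ?thesis using that by blast
qed

lemma correct_upto_down_diagonals_tl:
  assumes "correct_upto cs us ds (Suc n) (Suc n)" and "0 < n"
  obtains t ds' where "ds = Cons t ds'"
    and "\<forall>j\<in>{1..n}. \<forall>k. kth_member cs k (num j) \<longrightarrow> int k + int n - int j > 0 \<longrightarrow>
      kth_member ds' (nat (int k + int n - int j)) (num j)"
proof -
  obtain k where k: "kth_member cs k (num n)"
    using assms unfolding correct_upto_def is_member_def by fastforce
  then have "kth_member ds (nat (int k + 1)) (num n)"
    using assms kth_member_pos[OF k] unfolding correct_upto_def
    by (auto dest!: bspec[of _ _ n] spec[of _ k])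
  then obtain t ds' where ds: "ds = Cons t ds'"
    using kth_member_imp_Cons by blast
  have "kth_member ds' (nat (int k + int n - int j)) (num j)"
    if j: "j \<in> {1..n}" and k: "kth_member cs k (num j)" and pos: "int k + int n - int j > 0" for j k
  proof -
    have "kth_member ds (nat (int k + int (Suc n) - int j)) (num j)"
      using assms j k pos unfolding correct_upto_def by auto
    moreover have "nat (int k + int (Suc n) - int j) = Suc (nat (int k + int n - int j))"
      using pos by auto
    ultimately show ?thesis using ds kth_member_Cons_Suc pos by auto
  qed
  with ds show ?thesis using that by blast
qed

lemma correct_upto_Pqs:
  "correct_upto cs us ds i i \<Longrightarrow> Pqs (num i) cs us (Cons t ds) \<in> MP"
proof (induction i arbitrary: cs us ds t)
  case 0
  then show ?case using MP.C1 by (simp add: num_def)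
next
  case (Suc n)
  obtain y where up: "\<forall>j\<in>{1..n}. \<forall>k. kth_member cs k (num j) \<longrightarrow> int k + int j - int n > 0 \<longrightarrow>
    kth_member (Cons y us) (nat (int k + int j - int n)) (num j)"
    using correct_upto_up_diagonals_Cons[OF Suc.prems] .
  have "Pqs (num n) cs (Cons y us) ds \<in> MP"
  proof (cases "n = 0")
    case True
    then show ?thesis using MP.C1 by (simp add: num_def)
  next
    case False
    then obtain t' ds' where "ds = Cons t' ds'"
      and down: "\<forall>j\<in>{1..n}. \<forall>k. kth_member cs k (num j) \<longrightarrow> int k + int n - int j > 0 \<longrightarrow>
        kth_member ds' (nat (int k + int n - int j)) (num j)"
      using correct_upto_down_diagonals_tl[OF Suc.prems] by blast
    moreover have "correct_upto cs (Cons y us) ds' n n"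
      using correct_upto_lower[OF Suc.prems up down] .
    ultimately show ?thesis using Suc.IH by blast
  qed
  moreover have "Pq (num (Suc n)) cs us ds \<in> MP"
    using correct_upto_Pq[OF Suc.prems] by simp
  ultimately show ?case using MP.C2 by (simp add: num_Suc)
qed

theorem mainTheorem5:
  shows "S0 \<subseteq> MP \<and> S0_pqs \<subseteq> MP"
proof -
  have "S0_pqs \<subseteq> MP"
    unfolding S0_pqs_def using correct_upto_Pqs by auto
  moreover have "{Pqs Zero cs us ds | cs us ds. True} \<subseteq> MP"
    using MP.C1 by auto
  ultimately show ?thesis
    unfolding S0_def using S_pq_subset_MP by blast
qed

end
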